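(* Let $\mathcal{X}=\mathcal{Y}=\mathcal{A}=\mathcal{B}=\{0,1\}$ and $\epsilon\in[0,1)$. Then the inequality $$(1-\epsilon)\,p(00|00)+\epsilon(1-\epsilon)\,p(11|00)-p(01|01)-p(10|10)-p(00|11)\le\epsilon(1-\epsilon)$$ is valid for every $p\in\mathcal{P}_2^{AB,(\epsilon,\epsilon)}$ and defines a facet of this polytope, i.e. the set of points of $\mathcal{P}_2^{AB,(\epsilon,\epsilon)}$ attaining equality has affine dimension $\dim\mathcal{P}_2^{AB,(\epsilon,\epsilon)}-1$ (for $\epsilon\in(0,1)$ the polytope has dimension $12$).
   Context: Here $p(ab|xy)$ denotes the probability of outputs $(a,b)$ given inputs $(x,y)$. $\mathcal{P}_2^{AB,(\epsilon,\epsilon)}\subset\mathbb{R}^{16}$ is the set of all conditional distributions $p$ for which there exist a probability space $(\Lambda,q)$ and distributions $p_A(\cdot|x,y,\lambda)$ on $\{0,1\}$, $p_B(\cdot|x,y,\lambda)$ on $\{0,1\}$ with $p(ab|xy)=\int q(d\lambda)p_A(a|xy\lambda)p_B(b|xy\lambda)$ for all $a,b,x,y$, $\frac12\sum_a|p_A(a|xy\lambda)-p_A(a|xy'\lambda)|\le\epsilon$ for all $x,y,y',\lambda$, and $\frac12\sum_b|p_B(b|xy\lambda)-p_B(b|x'y\lambda)|\le\epsilon$ for all $y,x,x',\lambda$. It is a convex polytope. *)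

theory Defs
  imports "HOL-Probability.Probability"
begin

text \<open>Behaviours p(ab|xy) with a,b,x,y in {0,1} are points of real^16, encoded as
  p $ a $ b $ x $ y with indices of the two-element numeral type 2 (elements 0 and 1).\<close>

type_synonym behaviour = "real^2^2^2^2"

definition pr :: "behaviour \<Rightarrow> 2 \<Rightarrow> 2 \<Rightarrow> 2 \<Rightarrow> 2 \<Rightarrow> real" where
  "pr p a b x y = p $ a $ b $ x $ y"

text \<open>Local response distributions: pA x y l a = p_A(a|x y l), pB x y l b = p_B(b|x y l).
  The hidden variable space is a probability space on the (standard Borel) type real.\<close>

definition PAB :: "real \<Rightarrow> behaviour set" where
  "PAB \<epsilon> = {p. \<exists>(M::real measure) (pA :: 2 \<Rightarrow> 2 \<Rightarrow> real \<Rightarrow> 2 \<Rightarrow> real)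
                                  (pB :: 2 \<Rightarrow> 2 \<Rightarrow> real \<Rightarrow> 2 \<Rightarrow> real).
      prob_space M \<and>
      (\<forall>x y a. (\<lambda>l. pA x y l a) \<in> borel_measurable M) \<and>
      (\<forall>x y b. (\<lambda>l. pB x y l b) \<in> borel_measurable M) \<and>
      (\<forall>x y. \<forall>l\<in>space M. (\<forall>a. pA x y l a \<ge> 0) \<and> (\<Sum>a\<in>UNIV. pA x y l a) = 1) \<and>
      (\<forall>x y. \<forall>l\<in>space M. (\<forall>b. pB x y l b \<ge> 0) \<and> (\<Sum>b\<in>UNIV. pB x y l b) = 1) \<and>
      (\<forall>a b x y. pr p a b x y = (\<integral>l. pA x y l a * pB x y l b \<partial>M)) \<and>
      (\<forall>x y y'. \<forall>l\<in>space M. (1/2) * (\<Sum>a\<in>UNIV. \<bar>pA x y l a - pA x y' l a\<bar>) \<le> \<epsilon>) \<and>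
      (\<forall>y x x'. \<forall>l\<in>space M. (1/2) * (\<Sum>b\<in>UNIV. \<bar>pB x y l b - pB x' y l b\<bar>) \<le> \<epsilon>)}"

definition ineq_lhs :: "real \<Rightarrow> behaviour \<Rightarrow> real" where
  "ineq_lhs \<epsilon> p = (1 - \<epsilon>) * pr p 0 0 0 0 + \<epsilon> * (1 - \<epsilon>) * pr p 1 1 0 0
      - pr p 0 1 0 1 - pr p 1 0 1 0 - pr p 0 0 1 1"

end

theory Submission
  imports Defs
begin

text \<open>
  Every behaviour in \<open>PAB \<epsilon>\<close> is an average of product behaviours
  \<open>p\<^sub>A(a|xy) p\<^sub>B(b|xy)\<close> whose local responses move by at most \<open>\<epsilon>\<close> when the other
  party's input changes, so validity reduces to an elementary inequality in eight numbers
  \<open>p\<^sub>A(0|xy), p\<^sub>B(0|xy) \<in> [0,1]\<close>.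

  For the dimension count, every behaviour sums to one in each of the four contexts, so
  \<open>PAB \<epsilon>\<close> spans an affine space of dimension at most 12; for \<open>\<epsilon> = 0\<close> no-signalling
  cuts this down to 8. Conversely, product behaviours whose responses are taken from the
  \<open>\<epsilon>\<close>-close pairs \<open>(0,0), (1,1), (0,\<epsilon>), (\<epsilon>,0), (1,1-\<epsilon>), (1-\<epsilon>,1)\<close> give 12 (resp. 8)
  affinely independent points attaining equality; independence is read off a triangular
  pattern of coordinates. Since some point of the polytope violates equality, the face has
  dimension exactly one less than the polytope.
\<close>

section \<open>Elementary inequalities\<close>

lemma mixed_product_le_one:
  fixes e a b :: real
  assumes "0 \<le> e" "e \<le> 1" "0 \<le> a" "a \<le> 1" "0 \<le> b" "b \<le> 1"
  shows "a * b + e * (1 - a) * (1 - b) \<le> 1"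
proof -
  have "e * ((1 - a) * (1 - b)) \<le> (1 - a) * (1 - b)"
    using assms by (intro mult_left_le_one_le) auto
  moreover have "a * b \<le> a" "a * b \<le> b"
    using assms mult_right_le_one_le[of a b] mult_left_le_one_le[of b a] by auto
  ultimately show ?thesis by (simp add: algebra_simps)
qed

lemma mixed_product_le_excess:
  fixes e a b :: real
  assumes "0 \<le> e" "0 \<le> a" "a \<le> 1" "0 \<le> b" "b \<le> 1"
  shows "a * b + e * (1 - a) * (1 - b) \<le> e + max 0 (a - e)"
proof (cases "a \<le> e")
  case True
  have "a * b \<le> e * b" using True assms by (simp add: mult_right_mono)
  moreover have "e * (1 - b) * (1 - a) \<le> e * (1 - b)"
    using assms by (intro mult_left_le) auto
  ultimately show ?thesis using True by (simp add: algebra_simps)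
next
  case False
  have "0 \<le> a * e" using assms by simp
  then have "0 \<le> a - e * (1 - a)"
    using False by (simp add: algebra_simps)
  then have "0 \<le> (1 - b) * (a - e * (1 - a))"
    using assms by simp
  then show ?thesis using False by (simp add: algebra_simps)
qed

lemma shared_mass_le_penalty:
  fixes e m c d :: real
  assumes "0 \<le> m" "m \<le> 1 - e" "0 \<le> c" "c \<le> 1" "0 \<le> d" "d \<le> 1"
  shows "m * (1 - e) \<le> m * (1 - d) + m * (1 - c) + max 0 (c - e) * max 0 (d - e)"
proof (cases "c \<le> e \<or> d \<le> e")
  case True
  then show ?thesis using assms
    by (smt (verit) mult_left_mono mult_nonneg_nonneg)
next
  case False
  define s t L where "s = c - e" and "t = d - e" and "L = 1 - e"
  have st: "0 \<le> s" "s \<le> L" "0 \<le> t" "t \<le> L" "0 < L"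
    using False assms by (auto simp: s_def t_def L_def)
  \<comment> \<open>the claim is \<open>0 \<le> s t - m (s + t) + m L\<close>, and \<open>L\<close> times this is a sum of nonnegative products\<close>
  have "L * (s * t - m * (s + t) + m * L) = m * (L - s) * (L - t) + (L - m) * s * t"
    by (simp add: algebra_simps)
  also have "\<dots> \<ge> 0"
    using st assms by (simp add: L_def)
  finally have "0 \<le> s * t - m * (s + t) + m * L"
    using st by (simp add: zero_le_mult_iff)
  then show ?thesis using False by (simp add: s_def t_def L_def algebra_simps)
qed

text \<open>With \<open>axy = p\<^sub>A(0|xy)\<close> and \<open>bxy = p\<^sub>B(0|xy)\<close>, the left-hand side is
  \<open>ineq_lhs e\<close> of the product behaviour \<open>p\<^sub>A(a|xy) p\<^sub>B(b|xy)\<close>.\<close>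

lemma ineq_lhs_product_bound:
  fixes e a00 a01 a10 a11 b00 b01 b10 b11 :: real
  assumes e: "0 \<le> e" "e < 1"
    and range: "0 \<le> a00" "a00 \<le> 1" "0 \<le> a01" "a01 \<le> 1" "0 \<le> a10" "a10 \<le> 1"
      "0 \<le> a11" "a11 \<le> 1" "0 \<le> b00" "b00 \<le> 1" "0 \<le> b01" "b01 \<le> 1"
      "0 \<le> b10" "b10 \<le> 1" "0 \<le> b11" "b11 \<le> 1"
    and close: "\<bar>a00 - a01\<bar> \<le> e" "\<bar>a10 - a11\<bar> \<le> e" "\<bar>b00 - b10\<bar> \<le> e" "\<bar>b01 - b11\<bar> \<le> e"
  shows "(1 - e) * (a00 * b00) + e * (1 - e) * ((1 - a00) * (1 - b00))
      - a01 * (1 - b01) - (1 - a10) * b10 - a11 * b11 \<le> e * (1 - e)"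
proof -
  \<comment> \<open>\<open>m\<close> is a lower bound for both \<open>a01\<close> and \<open>b10\<close> that is forced by \<open>a00\<close> and \<open>b00\<close>\<close>
  define m where "m = min (max 0 (a00 - e)) (min (max 0 (b00 - e)) (1 - e))"
  have m: "0 \<le> m" "m \<le> 1 - e" "m \<le> a01" "m \<le> b10"
    using e range close unfolding m_def by linarith+
  have "m * (1 - e) \<le> m * (1 - b01) + m * (1 - a10) + max 0 (a10 - e) * max 0 (b01 - e)"
    using shared_mass_le_penalty[of m e a10 b01] m range by auto
  also have "\<dots> \<le> a01 * (1 - b01) + (1 - a10) * b10 + a11 * b11"
  proof -
    have "m * (1 - b01) \<le> a01 * (1 - b01)" "m * (1 - a10) \<le> b10 * (1 - a10)"
      using m range by (auto intro: mult_right_mono)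
    moreover have "max 0 (a10 - e) * max 0 (b01 - e) \<le> a11 * b11"
      using range close by (intro mult_mono) auto
    ultimately show ?thesis by (simp add: algebra_simps)
  qed
  finally have negative_part: "m * (1 - e) \<le> a01 * (1 - b01) + (1 - a10) * b10 + a11 * b11" .
  have "a00 * b00 + e * (1 - a00) * (1 - b00) \<le> e + m"
  proof -
    have "m = max 0 (a00 - e) \<or> m = max 0 (b00 - e) \<or> m = 1 - e"
      unfolding m_def by linarith
    moreover have "a00 * b00 + e * (1 - a00) * (1 - b00) \<le> e + max 0 (a00 - e)"
      using mixed_product_le_excess[of e a00 b00] e range by auto
    moreover have "b00 * a00 + e * (1 - b00) * (1 - a00) \<le> e + max 0 (b00 - e)"
      using mixed_product_le_excess[of e b00 a00] e range by auto
    moreover have "a00 * b00 + e * (1 - a00) * (1 - b00) \<le> 1"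
      using mixed_product_le_one[of e a00 b00] e range by auto
    ultimately show ?thesis by (auto simp: ac_simps)
  qed
  then have "(1 - e) * (a00 * b00 + e * (1 - a00) * (1 - b00)) \<le> (1 - e) * (e + m)"
    using e by (intro mult_left_mono) auto
  then show ?thesis using negative_part by (simp add: algebra_simps)
qed

section \<open>Local hidden-variable models\<close>

lemma exhaust_2_zero_one:
  fixes x :: 2
  shows "x = 0 \<or> x = 1"
proof -
  have "(2::2) = 0" by simp
  then show ?thesis using exhaust_2[of x] by auto
qed

lemma forall_2_zero_one: "(\<forall>x::2. P x) \<longleftrightarrow> P 0 \<and> P 1"
  by (metis exhaust_2_zero_one)

lemma UNIV_2_zero_one: "(UNIV :: 2 set) = {0, 1}"
  using exhaust_2_zero_one by auto

lemma sum_2_zero_one: "(\<Sum>a\<in>UNIV. f a) = f (0::2) + f 1"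
  by (simp add: UNIV_2_zero_one)

lemma distribution_on_2:
  fixes q :: "2 \<Rightarrow> real"
  assumes "\<forall>a. 0 \<le> q a" "(\<Sum>a\<in>UNIV. q a) = 1"
  shows "0 \<le> q 0" "q 0 \<le> 1" "q 1 = 1 - q 0"
  using assms by (auto simp: sum_2_zero_one) (metis le_add_same_cancel1)

lemma total_variation_on_2:
  fixes q r :: "2 \<Rightarrow> real"
  assumes "q 1 = 1 - q 0" "r 1 = 1 - r 0"
  shows "(1/2) * (\<Sum>a\<in>UNIV. \<bar>q a - r a\<bar>) = \<bar>q 0 - r 0\<bar>"
  using assms by (simp add: sum_2_zero_one abs_minus_commute)

definition lhv_behaviour ::
    "real measure \<Rightarrow> (2 \<Rightarrow> 2 \<Rightarrow> real \<Rightarrow> 2 \<Rightarrow> real) \<Rightarrow> (2 \<Rightarrow> 2 \<Rightarrow> real \<Rightarrow> 2 \<Rightarrow> real) \<Rightarrow> behaviour"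
  where "lhv_behaviour M pA pB = (\<chi> a b x y. \<integral>l. pA x y l a * pB x y l b \<partial>M)"

locale lhv_model = prob_space M for M :: "real measure" +
  fixes \<epsilon> :: real and pA pB :: "2 \<Rightarrow> 2 \<Rightarrow> real \<Rightarrow> 2 \<Rightarrow> real"
  assumes measurable_pA: "\<forall>x y a. (\<lambda>l. pA x y l a) \<in> borel_measurable M"
    and measurable_pB: "\<forall>x y b. (\<lambda>l. pB x y l b) \<in> borel_measurable M"
    and distribution_pA: "\<forall>x y. \<forall>l\<in>space M. (\<forall>a. pA x y l a \<ge> 0) \<and> (\<Sum>a\<in>UNIV. pA x y l a) = 1"
    and distribution_pB: "\<forall>x y. \<forall>l\<in>space M. (\<forall>b. pB x y l b \<ge> 0) \<and> (\<Sum>b\<in>UNIV. pB x y l b) = 1"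
    and close_pA: "\<forall>x y y'. \<forall>l\<in>space M. (1/2) * (\<Sum>a\<in>UNIV. \<bar>pA x y l a - pA x y' l a\<bar>) \<le> \<epsilon>"
    and close_pB: "\<forall>y x x'. \<forall>l\<in>space M. (1/2) * (\<Sum>b\<in>UNIV. \<bar>pB x y l b - pB x' y l b\<bar>) \<le> \<epsilon>"
begin

lemma pA_range: "l \<in> space M \<Longrightarrow> 0 \<le> pA x y l 0 \<and> pA x y l 0 \<le> 1"
  and pA_one: "l \<in> space M \<Longrightarrow> pA x y l 1 = 1 - pA x y l 0"
  using distribution_on_2[of "pA x y l"] distribution_pA by auto

lemma pB_range: "l \<in> space M \<Longrightarrow> 0 \<le> pB x y l 0 \<and> pB x y l 0 \<le> 1"
  and pB_one: "l \<in> space M \<Longrightarrow> pB x y l 1 = 1 - pB x y l 0"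
  using distribution_on_2[of "pB x y l"] distribution_pB by auto

lemma pA_close:
  assumes "l \<in> space M" shows "\<bar>pA x y l 0 - pA x y' l 0\<bar> \<le> \<epsilon>"
proof -
  have "(1/2) * (\<Sum>a\<in>UNIV. \<bar>pA x y l a - pA x y' l a\<bar>) \<le> \<epsilon>"
    using close_pA assms by blast
  then show ?thesis
    using total_variation_on_2[of "pA x y l" "pA x y' l"] pA_one[OF assms] by simp
qed

lemma pB_close:
  assumes "l \<in> space M" shows "\<bar>pB x y l 0 - pB x' y l 0\<bar> \<le> \<epsilon>"
proof -
  have "(1/2) * (\<Sum>b\<in>UNIV. \<bar>pB x y l b - pB x' y l b\<bar>) \<le> \<epsilon>"
    using close_pB assms by blast
  then show ?thesis
    using total_variation_on_2[of "pB x y l" "pB x' y l"] pB_one[OF assms] by simp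
qed

lemma pA_bounded: "l \<in> space M \<Longrightarrow> \<bar>pA x y l a\<bar> \<le> 1"
  using pA_range[of l x y] pA_one[of l x y] exhaust_2_zero_one[of a] by auto

lemma pB_bounded: "l \<in> space M \<Longrightarrow> \<bar>pB x y l b\<bar> \<le> 1"
  using pB_range[of l x y] pB_one[of l x y] exhaust_2_zero_one[of b] by auto

lemma integrable_pA: "integrable M (\<lambda>l. pA x y l a)"
  using pA_bounded measurable_pA by (intro integrable_const_bound[where B=1]) auto

lemma integrable_pA_pB: "integrable M (\<lambda>l. pA x y l a * pB x y l b)"
proof (rule integrable_const_bound[where B=1])
  show "AE l in M. norm (pA x y l a * pB x y l b) \<le> 1"
    using pA_bounded pB_bounded by (auto simp: abs_mult intro!: mult_le_one)
  show "(\<lambda>l. pA x y l a * pB x y l b) \<in> borel_measurable M"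
    using measurable_pA measurable_pB by (intro borel_measurable_times) auto
qed

lemma lhv_behaviour_component:
  "lhv_behaviour M pA pB $ a $ b $ x $ y = (\<integral>l. pA x y l a * pB x y l b \<partial>M)"
  by (simp add: lhv_behaviour_def)

lemma ineq_lhs_le:
  assumes "0 \<le> \<epsilon>" "\<epsilon> < 1"
  shows "ineq_lhs \<epsilon> (lhv_behaviour M pA pB) \<le> \<epsilon> * (1 - \<epsilon>)"
proof -
  define G where "G l = (1 - \<epsilon>) * (pA 0 0 l 0 * pB 0 0 l 0)
      + \<epsilon> * (1 - \<epsilon>) * (pA 0 0 l 1 * pB 0 0 l 1)
      - pA 0 1 l 0 * pB 0 1 l 1 - pA 1 0 l 1 * pB 1 0 l 0 - pA 1 1 l 0 * pB 1 1 l 0" for l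
  have "ineq_lhs \<epsilon> (lhv_behaviour M pA pB) = (\<integral>l. G l \<partial>M)"
    unfolding ineq_lhs_def G_def pr_def lhv_behaviour_component
    using integrable_pA_pB by simp
  also have "\<dots> \<le> (\<integral>l. \<epsilon> * (1 - \<epsilon>) \<partial>M)"
  proof (rule integral_mono)
    show "integrable M G" unfolding G_def using integrable_pA_pB by simp
    fix l assume l: "l \<in> space M"
    have "G l = (1 - \<epsilon>) * (pA 0 0 l 0 * pB 0 0 l 0)
        + \<epsilon> * (1 - \<epsilon>) * ((1 - pA 0 0 l 0) * (1 - pB 0 0 l 0))
        - pA 0 1 l 0 * (1 - pB 0 1 l 0) - (1 - pA 1 0 l 0) * pB 1 0 l 0 - pA 1 1 l 0 * pB 1 1 l 0"
      by (simp add: G_def pA_one[OF l] pB_one[OF l])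
    also have "\<dots> \<le> \<epsilon> * (1 - \<epsilon>)"
      using pA_range[OF l] pB_range[OF l] pA_close[OF l] pB_close[OF l]
      by (intro ineq_lhs_product_bound assms) auto
    finally show "G l \<le> \<epsilon> * (1 - \<epsilon>)" .
  qed simp
  also have "\<dots> = \<epsilon> * (1 - \<epsilon>)" by (simp add: prob_space)
  finally show ?thesis .
qed

lemma marginal_A:
  "lhv_behaviour M pA pB $ a $ 0 $ x $ y + lhv_behaviour M pA pB $ a $ 1 $ x $ y = (\<integral>l. pA x y l a \<partial>M)"
proof -
  have "lhv_behaviour M pA pB $ a $ 0 $ x $ y + lhv_behaviour M pA pB $ a $ 1 $ x $ y
      = (\<integral>l. pA x y l a * pB x y l 0 + pA x y l a * pB x y l 1 \<partial>M)"
    using integrable_pA_pB by (simp add: lhv_behaviour_component)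
  also have "\<dots> = (\<integral>l. pA x y l a \<partial>M)"
    by (rule Bochner_Integration.integral_cong) (simp_all add: pB_one distrib_left[symmetric])
  finally show ?thesis .
qed

lemma marginal_B:
  "lhv_behaviour M pA pB $ 0 $ b $ x $ y + lhv_behaviour M pA pB $ 1 $ b $ x $ y = (\<integral>l. pB x y l b \<partial>M)"
proof -
  have "lhv_behaviour M pA pB $ 0 $ b $ x $ y + lhv_behaviour M pA pB $ 1 $ b $ x $ y
      = (\<integral>l. pA x y l 0 * pB x y l b + pA x y l 1 * pB x y l b \<partial>M)"
    using integrable_pA_pB by (simp add: lhv_behaviour_component)
  also have "\<dots> = (\<integral>l. pB x y l b \<partial>M)"
    by (rule Bochner_Integration.integral_cong) (simp_all add: pA_one distrib_right[symmetric])
  finally show ?thesis .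
qed

lemma lhv_behaviour_normalised:
  "lhv_behaviour M pA pB $ 0 $ 0 $ x $ y + lhv_behaviour M pA pB $ 0 $ 1 $ x $ y
    + lhv_behaviour M pA pB $ 1 $ 0 $ x $ y + lhv_behaviour M pA pB $ 1 $ 1 $ x $ y = 1"
proof -
  have "(\<integral>l. pA x y l 0 \<partial>M) + (\<integral>l. pA x y l 1 \<partial>M) = (\<integral>l. pA x y l 0 + pA x y l 1 \<partial>M)"
    using integrable_pA by simp
  also have "\<dots> = (\<integral>l. 1 \<partial>M)"
    by (rule Bochner_Integration.integral_cong) (simp_all add: pA_one)
  finally have "(\<integral>l. pA x y l 0 \<partial>M) + (\<integral>l. pA x y l 1 \<partial>M) = 1"
    by (simp add: prob_space)
  then show ?thesis
    using marginal_A[of 0 x y] marginal_A[of 1 x y] by simp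
qed

lemma no_signalling_A:
  assumes "\<epsilon> = 0"
  shows "lhv_behaviour M pA pB $ a $ 0 $ x $ y + lhv_behaviour M pA pB $ a $ 1 $ x $ y
    = lhv_behaviour M pA pB $ a $ 0 $ x $ y' + lhv_behaviour M pA pB $ a $ 1 $ x $ y'"
proof -
  have "pA x y l a = pA x y' l a" if "l \<in> space M" for l
    using pA_close[OF that, of x y y'] pA_one[OF that] assms exhaust_2_zero_one[of a] by auto
  then show ?thesis by (auto simp: marginal_A intro!: Bochner_Integration.integral_cong)
qed

lemma no_signalling_B:
  assumes "\<epsilon> = 0"
  shows "lhv_behaviour M pA pB $ 0 $ b $ x $ y + lhv_behaviour M pA pB $ 1 $ b $ x $ y
    = lhv_behaviour M pA pB $ 0 $ b $ x' $ y + lhv_behaviour M pA pB $ 1 $ b $ x' $ y"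
proof -
  have "pB x y l b = pB x' y l b" if "l \<in> space M" for l
    using pB_close[OF that, of x y x'] pB_one[OF that] assms exhaust_2_zero_one[of b] by auto
  then show ?thesis by (auto simp: marginal_B intro!: Bochner_Integration.integral_cong)
qed

end

lemma PAB_iff:
  "p \<in> PAB \<epsilon> \<longleftrightarrow> (\<exists>M pA pB. lhv_model M \<epsilon> pA pB \<and> p = lhv_behaviour M pA pB)"
proof -
  have behaviour_eq: "p = lhv_behaviour M pA pB
      \<longleftrightarrow> (\<forall>a b x y. pr p a b x y = (\<integral>l. pA x y l a * pB x y l b \<partial>M))"
    for M pA pB
    by (simp add: lhv_behaviour_def vec_eq_iff pr_def)
  show ?thesis
    unfolding PAB_def mem_Collect_eq lhv_model_def lhv_model_axioms_def behaviour_eq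
    by (intro ex_cong1) (simp only: conj_ac)
qed

lemma PAB_ineq_lhs_le:
  assumes "0 \<le> \<epsilon>" "\<epsilon> < 1" "p \<in> PAB \<epsilon>"
  shows "ineq_lhs \<epsilon> p \<le> \<epsilon> * (1 - \<epsilon>)"
  using assms lhv_model.ineq_lhs_le unfolding PAB_iff by blast

lemma PAB_normalised:
  assumes "p \<in> PAB \<epsilon>"
  shows "p $ 0 $ 0 $ x $ y + p $ 0 $ 1 $ x $ y + p $ 1 $ 0 $ x $ y + p $ 1 $ 1 $ x $ y = 1"
  using assms lhv_model.lhv_behaviour_normalised unfolding PAB_iff by blast

lemma PAB_0_no_signalling:
  assumes "p \<in> PAB 0"
  shows "p $ a $ 0 $ x $ y + p $ a $ 1 $ x $ y = p $ a $ 0 $ x $ y' + p $ a $ 1 $ x $ y'"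
    and "p $ 0 $ b $ x $ y + p $ 1 $ b $ x $ y = p $ 0 $ b $ x' $ y + p $ 1 $ b $ x' $ y"
  using assms lhv_model.no_signalling_A lhv_model.no_signalling_B unfolding PAB_iff by blast+

section \<open>Product behaviours\<close>

definition outcome_prob :: "real \<Rightarrow> 2 \<Rightarrow> real" where
  "outcome_prob u a = (if a = 0 then u else 1 - u)"

definition product_behaviour :: "(2 \<Rightarrow> 2 \<Rightarrow> real) \<Rightarrow> (2 \<Rightarrow> 2 \<Rightarrow> real) \<Rightarrow> behaviour" where
  "product_behaviour \<alpha> \<beta> = (\<chi> a b x y. outcome_prob (\<alpha> x y) a * outcome_prob (\<beta> x y) b)"

lemma product_behaviour_in_PAB:
  assumes "\<And>x y. 0 \<le> \<alpha> x y \<and> \<alpha> x y \<le> 1" "\<And>x y. 0 \<le> \<beta> x y \<and> \<beta> x y \<le> 1"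
    and "\<And>x y y'. \<bar>\<alpha> x y - \<alpha> x y'\<bar> \<le> \<epsilon>" "\<And>x x' y. \<bar>\<beta> x y - \<beta> x' y\<bar> \<le> \<epsilon>"
  shows "product_behaviour \<alpha> \<beta> \<in> PAB \<epsilon>"
proof -
  let ?M = "return borel (0::real)"
  let ?pA = "\<lambda>x y l. outcome_prob (\<alpha> x y)" and ?pB = "\<lambda>x y l. outcome_prob (\<beta> x y)"
  interpret prob_space ?M by (rule prob_space_return) simp
  have "lhv_model ?M \<epsilon> ?pA ?pB"
    by unfold_locales
      (use assms in \<open>auto simp: sum_2_zero_one outcome_prob_def abs_minus_commute\<close>)
  moreover have "prob UNIV = 1" using prob_space by simp
  then have "product_behaviour \<alpha> \<beta> = lhv_behaviour ?M ?pA ?pB"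
    by (simp add: product_behaviour_def lhv_behaviour_def)
  ultimately show ?thesis unfolding PAB_iff by blast
qed

definition admissible_pairs :: "real \<Rightarrow> (real \<times> real) list" where
  "admissible_pairs \<epsilon> = [(0, 0), (1, 1), (0, \<epsilon>), (\<epsilon>, 0), (1, 1 - \<epsilon>), (1 - \<epsilon>, 1)]"

definition pair_at :: "2 \<Rightarrow> real \<times> real \<Rightarrow> real" where
  "pair_at z uv = (if z = 0 then fst uv else snd uv)"

text \<open>In \<open>vertex \<epsilon> (i0, i1, j0, j1)\<close> Alice answers input \<open>x\<close> with pair number \<open>ix\<close>,
  read as \<open>(p\<^sub>A(0|x0), p\<^sub>A(0|x1))\<close>, and Bob answers input \<open>y\<close> with pair number \<open>jy\<close>,
  read as \<open>(p\<^sub>B(0|0y), p\<^sub>B(0|1y))\<close>.\<close>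

definition vertex :: "real \<Rightarrow> nat \<times> nat \<times> nat \<times> nat \<Rightarrow> behaviour" where
  "vertex \<epsilon> = (\<lambda>(i0, i1, j0, j1). product_behaviour
     (\<lambda>x y. pair_at y (admissible_pairs \<epsilon> ! (if x = 0 then i0 else i1)))
     (\<lambda>x y. pair_at x (admissible_pairs \<epsilon> ! (if y = 0 then j0 else j1))))"

lemma pair_at_admissible:
  assumes "0 \<le> \<epsilon>" "\<epsilon> \<le> 1" "i < 6"
  shows "0 \<le> pair_at z (admissible_pairs \<epsilon> ! i) \<and> pair_at z (admissible_pairs \<epsilon> ! i) \<le> 1"
    and "\<bar>pair_at z (admissible_pairs \<epsilon> ! i) - pair_at z' (admissible_pairs \<epsilon> ! i)\<bar> \<le> \<epsilon>"
proof -
  obtain u v where uv: "admissible_pairs \<epsilon> ! i = (u, v)" by fastforce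
  have "length (admissible_pairs \<epsilon>) = 6" by (simp add: admissible_pairs_def)
  then have "(u, v) \<in> set (admissible_pairs \<epsilon>)" using assms(3) uv by (metis nth_mem)
  then have "0 \<le> u \<and> u \<le> 1 \<and> 0 \<le> v \<and> v \<le> 1 \<and> \<bar>u - v\<bar> \<le> \<epsilon>"
    using assms by (auto simp: admissible_pairs_def)
  then show "0 \<le> pair_at z (admissible_pairs \<epsilon> ! i) \<and> pair_at z (admissible_pairs \<epsilon> ! i) \<le> 1"
    and "\<bar>pair_at z (admissible_pairs \<epsilon> ! i) - pair_at z' (admissible_pairs \<epsilon> ! i)\<bar> \<le> \<epsilon>"
    using assms(1) uv by (auto simp: pair_at_def abs_minus_commute)
qed

lemma vertex_in_PAB:
  assumes "0 \<le> \<epsilon>" "\<epsilon> \<le> 1" "i0 < 6" "i1 < 6" "j0 < 6" "j1 < 6"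
  shows "vertex \<epsilon> (i0, i1, j0, j1) \<in> PAB \<epsilon>"
  unfolding vertex_def prod.case
  using assms by (intro product_behaviour_in_PAB) (simp_all add: pair_at_admissible)

lemma vertex_component:
  "vertex \<epsilon> (i0, i1, j0, j1) $ a $ b $ x $ y
    = outcome_prob (pair_at y (admissible_pairs \<epsilon> ! (if x = 0 then i0 else i1))) a
      * outcome_prob (pair_at x (admissible_pairs \<epsilon> ! (if y = 0 then j0 else j1))) b"
  by (simp add: vertex_def product_behaviour_def)

lemmas vertex_eval = vertex_component admissible_pairs_def pair_at_def outcome_prob_def

section \<open>Affine dimension from triangular families\<close>

lemma independent_if_triangular:
  fixes D :: "nat \<Rightarrow> 'v::real_vector" and g :: "nat \<Rightarrow> 'v \<Rightarrow> real"
  assumes "\<And>j. j < n \<Longrightarrow> linear (g j)"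
    and "\<And>i j. i < j \<Longrightarrow> j < n \<Longrightarrow> g j (D i) = 0"
    and "\<And>i. i < n \<Longrightarrow> g i (D i) \<noteq> 0"
  shows "independent (D ` {..<n}) \<and> card (D ` {..<n}) = n"
  using assms
proof (induction n)
  case 0
  then show ?case by (simp add: independent_empty)
next
  case (Suc n)
  have IH: "independent (D ` {..<n}) \<and> card (D ` {..<n}) = n"
    using Suc.prems by (intro Suc.IH) auto
  have not_in_span: "D n \<notin> span (D ` {..<n})"
  proof
    assume in_span: "D n \<in> span (D ` {..<n})"
    have "linear (g n)" "\<And>v. v \<in> D ` {..<n} \<Longrightarrow> g n v = 0"
      using Suc.prems(1,2) by auto
    then have "g n (D n) = 0"
      using in_span by (rule linear_eq_0_on_span)
    with Suc.prems(3)[of n] show False by simp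
  qed
  then have "D n \<notin> D ` {..<n}"
    using span_base by metis
  then show ?case
    unfolding lessThan_Suc image_insert
    using IH not_in_span by (simp add: independent_insertI card_insert_if)
qed

lemma aff_dim_ge_if_triangular:
  fixes S :: "'v::euclidean_space set" and g :: "nat \<Rightarrow> 'v \<Rightarrow> real"
  assumes "base \<in> S" "\<And>i. i < n \<Longrightarrow> P i \<in> S"
    and "\<And>j. j < n \<Longrightarrow> linear (g j)"
    and "\<And>i j. i < j \<Longrightarrow> j < n \<Longrightarrow> g j (P i - base) = 0"
    and "\<And>i. i < n \<Longrightarrow> g i (P i - base) \<noteq> 0"
  shows "int n \<le> aff_dim S"
proof -
  define D where "D i = P i - base" for i
  have D: "independent (D ` {..<n}) \<and> card (D ` {..<n}) = n"
    using assms(3-5) unfolding D_def by (rule independent_if_triangular)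
  have "D ` {..<n} \<subseteq> (\<lambda>p. p - base) ` S"
    using assms(2) by (auto simp: D_def)
  then have "n \<le> dim ((\<lambda>p. p - base) ` S)"
    using D independent_card_le_dim by metis
  moreover have "aff_dim S = int (dim ((\<lambda>p. p - base) ` S))"
    by (rule aff_dim_eq_dim_subtract) (simp add: assms(1) hull_inc)
  ultimately show ?thesis by simp
qed

lemma aff_dim_le_DIM_if_translate_in_range:
  fixes f :: "'a::euclidean_space \<Rightarrow> 'v::euclidean_space"
  assumes "linear f" "base \<in> S" "\<And>p. p \<in> S \<Longrightarrow> p - base \<in> range f"
  shows "aff_dim S \<le> DIM('a)"
proof -
  have "dim ((\<lambda>p. p - base) ` S) \<le> dim (range f)"
    using assms(3) by (intro dim_subset) auto
  also have "\<dots> \<le> dim (UNIV :: 'a set)"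
    using assms(1) by (rule dim_image_le)
  finally have "dim ((\<lambda>p. p - base) ` S) \<le> DIM('a)" by simp
  moreover have "aff_dim S = int (dim ((\<lambda>p. p - base) ` S))"
    by (rule aff_dim_eq_dim_subtract) (simp add: assms(2) hull_inc)
  ultimately show ?thesis by simp
qed

lemma affine_level_set:
  fixes f :: "'v::real_vector \<Rightarrow> real"
  assumes "linear f"
  shows "affine {x. f x = c}"
  unfolding affine_def
  using linear_add[OF assms] linear_scale[OF assms] by (simp add: distrib_right[symmetric])

lemma aff_dim_lt_if_outside_affine:
  fixes S :: "'v::euclidean_space set"
  assumes "F \<subseteq> S" "F \<subseteq> T" "affine T" "q \<in> S" "q \<notin> T"
  shows "aff_dim F < aff_dim S"
proof (rule aff_dim_psubset)
  have "affine hull F \<subseteq> T"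
    using assms(2,3) by (rule hull_minimal)
  moreover have "q \<in> affine hull S"
    using assms(4) by (rule hull_inc)
  ultimately show "affine hull F \<subset> affine hull S"
    using hull_mono[OF assms(1)] assms(5) by blast
qed

section \<open>The dimension count\<close>

text \<open>Differences of behaviours sum to zero in every context; such vectors are parametrised
  by their \<open>00\<close>-entry and the two \<open>0\<close>-marginals, and under no-signalling the marginals
  depend on one input only (\<open>ns_param\<close>).\<close>

definition marginal_param :: "(real^2^2) \<times> (real^2^2) \<times> (real^2^2) \<Rightarrow> behaviour" where
  "marginal_param = (\<lambda>(u, \<alpha>, \<beta>). \<chi> a b x y.
     if a = 0 \<and> b = 0 then u $ x $ y
     else if a = 0 then \<alpha> $ x $ y - u $ x $ y
     else if b = 0 then \<beta> $ x $ y - u $ x $ y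
     else u $ x $ y - \<alpha> $ x $ y - \<beta> $ x $ y)"

lemma linear_marginal_param: "linear marginal_param"
proof (rule linearI)
  fix v w :: "(real^2^2) \<times> (real^2^2) \<times> (real^2^2)" and r :: real
  show "marginal_param (v + w) = marginal_param v + marginal_param w"
    by (cases v rule: prod_cases3, cases w rule: prod_cases3)
      (simp add: marginal_param_def vec_eq_iff algebra_simps)
  show "marginal_param (r *\<^sub>R v) = r *\<^sub>R marginal_param v"
    by (cases v rule: prod_cases3) (simp add: marginal_param_def vec_eq_iff algebra_simps)
qed

lemma marginal_param_coordinates:
  assumes "\<And>x y. v $ 0 $ 0 $ x $ y + v $ 0 $ 1 $ x $ y + v $ 1 $ 0 $ x $ y + v $ 1 $ 1 $ x $ y = 0"
  shows "v = marginal_param (\<chi> x y. v $ 0 $ 0 $ x $ y,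
    \<chi> x y. v $ 0 $ 0 $ x $ y + v $ 0 $ 1 $ x $ y, \<chi> x y. v $ 0 $ 0 $ x $ y + v $ 1 $ 0 $ x $ y)"
proof -
  have "v $ 1 $ 1 $ x $ y = - (v $ 0 $ 0 $ x $ y + v $ 0 $ 1 $ x $ y + v $ 1 $ 0 $ x $ y)" for x y
    using assms[of x y] by linarith
  then show ?thesis by (simp add: marginal_param_def vec_eq_iff forall_2_zero_one)
qed

definition ns_param :: "(real^2^2) \<times> (real^2) \<times> (real^2) \<Rightarrow> behaviour" where
  "ns_param = (\<lambda>(u, \<alpha>, \<beta>). marginal_param (u, \<chi> x y. \<alpha> $ x, \<chi> x y. \<beta> $ y))"

lemma linear_ns_param: "linear ns_param"
proof (rule linearI)
  fix v w :: "(real^2^2) \<times> (real^2) \<times> (real^2)" and r :: real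
  show "ns_param (v + w) = ns_param v + ns_param w"
    by (cases v rule: prod_cases3, cases w rule: prod_cases3)
      (simp add: ns_param_def marginal_param_def vec_eq_iff algebra_simps)
  show "ns_param (r *\<^sub>R v) = r *\<^sub>R ns_param v"
    by (cases v rule: prod_cases3)
      (simp add: ns_param_def marginal_param_def vec_eq_iff algebra_simps)
qed

lemma ns_param_coordinates:
  assumes "\<And>x y. v $ 0 $ 0 $ x $ y + v $ 0 $ 1 $ x $ y + v $ 1 $ 0 $ x $ y + v $ 1 $ 1 $ x $ y = 0"
    and "\<And>x y. v $ 0 $ 0 $ x $ y + v $ 0 $ 1 $ x $ y = \<alpha> $ x"
    and "\<And>x y. v $ 0 $ 0 $ x $ y + v $ 1 $ 0 $ x $ y = \<beta> $ y"
  shows "v = ns_param (\<chi> x y. v $ 0 $ 0 $ x $ y, \<alpha>, \<beta>)"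
proof -
  have "v = marginal_param (\<chi> x y. v $ 0 $ 0 $ x $ y,
    \<chi> x y. v $ 0 $ 0 $ x $ y + v $ 0 $ 1 $ x $ y, \<chi> x y. v $ 0 $ 0 $ x $ y + v $ 1 $ 0 $ x $ y)"
    using assms(1) by (rule marginal_param_coordinates)
  then show ?thesis by (simp add: ns_param_def assms(2,3))
qed

lemma aff_dim_PAB_le_12:
  assumes "0 \<le> \<epsilon>" "\<epsilon> \<le> 1"
  shows "aff_dim (PAB \<epsilon>) \<le> 12"
proof -
  let ?base = "vertex \<epsilon> (0, 0, 0, 0)"
  have base: "?base \<in> PAB \<epsilon>" using assms by (simp add: vertex_in_PAB)
  have "p - ?base \<in> range marginal_param" if "p \<in> PAB \<epsilon>" for p
  proof -
    have zero_sum: "(p - ?base) $ 0 $ 0 $ x $ y + (p - ?base) $ 0 $ 1 $ x $ y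
        + (p - ?base) $ 1 $ 0 $ x $ y + (p - ?base) $ 1 $ 1 $ x $ y = 0" for x y
      using PAB_normalised[OF that, of x y] PAB_normalised[OF base, of x y] by simp
    show ?thesis
      by (rule image_eqI[where f = marginal_param, OF marginal_param_coordinates[OF zero_sum] UNIV_I])
  qed
  then have "aff_dim (PAB \<epsilon>) \<le> DIM((real^2^2) \<times> (real^2^2) \<times> (real^2^2))"
    by (intro aff_dim_le_DIM_if_translate_in_range[OF linear_marginal_param base])
  then show ?thesis by simp
qed

lemma aff_dim_PAB_0_le_8: "aff_dim (PAB 0) \<le> 8"
proof -
  let ?base = "vertex 0 (0, 0, 0, 0)"
  have base: "?base \<in> PAB 0" by (simp add: vertex_in_PAB)
  have "p - ?base \<in> range ns_param" if "p \<in> PAB 0" for p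
  proof -
    let ?v = "p - ?base"
    have zero_sum: "?v $ 0 $ 0 $ x $ y + ?v $ 0 $ 1 $ x $ y + ?v $ 1 $ 0 $ x $ y + ?v $ 1 $ 1 $ x $ y = 0"
      for x y
      using PAB_normalised[OF that, of x y] PAB_normalised[OF base, of x y] by simp
    have alice_marginal: "?v $ 0 $ 0 $ x $ y + ?v $ 0 $ 1 $ x $ y
        = (\<chi> x. ?v $ 0 $ 0 $ x $ 0 + ?v $ 0 $ 1 $ x $ 0) $ x" for x y
      using PAB_0_no_signalling(1)[OF that, of 0 x y 0] PAB_0_no_signalling(1)[OF base, of 0 x y 0] by simp
    have bob_marginal: "?v $ 0 $ 0 $ x $ y + ?v $ 1 $ 0 $ x $ y
        = (\<chi> y. ?v $ 0 $ 0 $ 0 $ y + ?v $ 1 $ 0 $ 0 $ y) $ y" for x y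
      using PAB_0_no_signalling(2)[OF that, of 0 x y 0] PAB_0_no_signalling(2)[OF base, of 0 x y 0] by simp
    show ?thesis
      by (rule image_eqI[where f = ns_param,
            OF ns_param_coordinates[OF zero_sum alice_marginal bob_marginal] UNIV_I])
  qed
  then have "aff_dim (PAB 0) \<le> DIM((real^2^2) \<times> (real^2) \<times> (real^2))"
    by (intro aff_dim_le_DIM_if_translate_in_range[OF linear_ns_param base])
  then show ?thesis by simp
qed

definition entry :: "2 \<times> 2 \<times> 2 \<times> 2 \<Rightarrow> behaviour \<Rightarrow> real" where
  "entry k v = (case k of (a, b, x, y) \<Rightarrow> v $ a $ b $ x $ y)"

lemma linear_entry: "linear (entry k)"
  by (cases k) (auto intro!: linearI simp: entry_def)

definition equality_face :: "real \<Rightarrow> behaviour set" where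
  "equality_face \<epsilon> = {p \<in> PAB \<epsilon>. ineq_lhs \<epsilon> p = \<epsilon> * (1 - \<epsilon>)}"

text \<open>Relative to the base vertex \<open>(0, 0, 0, 0)\<close> (both parties always answer \<open>1\<close>), the
  \<open>j\<close>-th listed entry vanishes on the differences of the first \<open>j\<close> listed vertices but not
  on that of the \<open>j\<close>-th.\<close>

definition face_vertices_pos :: "(nat \<times> nat \<times> nat \<times> nat) list" where
  "face_vertices_pos = [(0,0,0,2), (0,0,0,1), (0,2,0,0), (0,1,0,0), (0,1,2,0), (2,0,0,1),
     (1,0,3,1), (1,3,4,1), (1,4,1,4), (3,1,1,0), (4,1,1,3)]"

definition face_entries_pos :: "(2 \<times> 2 \<times> 2 \<times> 2) list" where
  "face_entries_pos = [(1,1,1,1), (1,1,0,1), (0,1,1,1), (1,1,1,0), (0,0,1,0), (0,0,0,1),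
     (1,1,0,0), (1,0,1,0), (0,0,1,1), (1,0,0,0), (0,1,0,1)]"

lemma equality_face_aff_dim_ge_11:
  assumes "0 < \<epsilon>" "\<epsilon> < 1"
  shows "11 \<le> aff_dim (equality_face \<epsilon>)"
proof -
  let ?P = "\<lambda>i. vertex \<epsilon> (face_vertices_pos ! i)" and ?base = "vertex \<epsilon> (0, 0, 0, 0)"
  let ?g = "\<lambda>j. entry (face_entries_pos ! j)"
  have "?base \<in> equality_face \<epsilon>"
    using assms by (simp add: equality_face_def vertex_in_PAB ineq_lhs_def pr_def vertex_eval)
  moreover have "\<forall>i\<in>{..<11}. ?P i \<in> equality_face \<epsilon>"
    using assms by (simp add: lessThan_nat_numeral face_vertices_pos_def equality_face_def
        vertex_in_PAB ineq_lhs_def pr_def vertex_eval algebra_simps)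
  moreover have "\<forall>j\<in>{..<11}. \<forall>i\<in>{..<j}. ?g j (?P i - ?base) = 0"
    by (simp add: lessThan_nat_numeral face_vertices_pos_def face_entries_pos_def entry_def
        vertex_eval)
  moreover have "\<forall>i\<in>{..<11}. ?g i (?P i - ?base) \<noteq> 0"
    using assms by (simp add: lessThan_nat_numeral face_vertices_pos_def face_entries_pos_def entry_def
        vertex_eval)
  ultimately have "int 11 \<le> aff_dim (equality_face \<epsilon>)"
    by (intro aff_dim_ge_if_triangular[where P = ?P and base = ?base and g = ?g] linear_entry) auto
  then show ?thesis by simp
qed

definition face_vertices_0 :: "(nat \<times> nat \<times> nat \<times> nat) list" where
  "face_vertices_0 = [(0,0,0,1), (0,1,0,0), (0,1,1,0), (1,0,0,1), (1,0,1,1), (1,1,1,0), (1,1,1,1)]"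

definition face_entries_0 :: "(2 \<times> 2 \<times> 2 \<times> 2) list" where
  "face_entries_0 = [(1,1,0,1), (1,1,1,0), (0,0,1,0), (0,0,0,1), (1,0,1,0), (0,1,0,1), (0,0,1,1)]"

lemma equality_face_0_aff_dim_ge_7: "7 \<le> aff_dim (equality_face 0)"
proof -
  let ?P = "\<lambda>i. vertex 0 (face_vertices_0 ! i)" and ?base = "vertex 0 (0, 0, 0, 0)"
  let ?g = "\<lambda>j. entry (face_entries_0 ! j)"
  have "?base \<in> equality_face 0"
    by (simp add: equality_face_def vertex_in_PAB ineq_lhs_def pr_def vertex_eval)
  moreover have "\<forall>i\<in>{..<7}. ?P i \<in> equality_face 0"
    by (simp add: lessThan_nat_numeral face_vertices_0_def equality_face_def vertex_in_PAB
        ineq_lhs_def pr_def vertex_eval)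
  moreover have "\<forall>j\<in>{..<7}. \<forall>i\<in>{..<j}. ?g j (?P i - ?base) = 0"
    by (simp add: lessThan_nat_numeral face_vertices_0_def face_entries_0_def entry_def
        vertex_eval)
  moreover have "\<forall>i\<in>{..<7}. ?g i (?P i - ?base) \<noteq> 0"
    by (simp add: lessThan_nat_numeral face_vertices_0_def face_entries_0_def entry_def
        vertex_eval)
  ultimately have "int 7 \<le> aff_dim (equality_face 0)"
    by (intro aff_dim_ge_if_triangular[where P = ?P and base = ?base and g = ?g] linear_entry) auto
  then show ?thesis by simp
qed

lemma linear_ineq_lhs: "linear (ineq_lhs \<epsilon>)"
  by (rule linearI) (simp_all add: ineq_lhs_def pr_def algebra_simps)

lemma equality_face_aff_dim_lt:
  assumes "0 \<le> \<epsilon>" "\<epsilon> < 1"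
  shows "aff_dim (equality_face \<epsilon>) < aff_dim (PAB \<epsilon>)"
proof (rule aff_dim_lt_if_outside_affine)
  let ?q = "vertex \<epsilon> (1, 1, 0, 0)"
  show "equality_face \<epsilon> \<subseteq> PAB \<epsilon>"
    and "equality_face \<epsilon> \<subseteq> {p. ineq_lhs \<epsilon> p = \<epsilon> * (1 - \<epsilon>)}"
    by (auto simp: equality_face_def)
  show "affine {p. ineq_lhs \<epsilon> p = \<epsilon> * (1 - \<epsilon>)}"
    by (rule affine_level_set[OF linear_ineq_lhs])
  show "?q \<in> PAB \<epsilon>"
    using assms by (simp add: vertex_in_PAB)
  have "ineq_lhs \<epsilon> ?q = -1"
    by (simp add: ineq_lhs_def pr_def vertex_eval)
  moreover have "0 \<le> \<epsilon> * (1 - \<epsilon>)"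
    using assms by simp
  ultimately show "?q \<notin> {p. ineq_lhs \<epsilon> p = \<epsilon> * (1 - \<epsilon>)}"
    by simp
qed

theorem mainTheorem6:
  fixes \<epsilon> :: real
  assumes "0 \<le> \<epsilon>" and "\<epsilon> < 1"
  shows "(\<forall>p\<in>PAB \<epsilon>. ineq_lhs \<epsilon> p \<le> \<epsilon> * (1 - \<epsilon>))
    \<and> aff_dim {p \<in> PAB \<epsilon>. ineq_lhs \<epsilon> p = \<epsilon> * (1 - \<epsilon>)} = aff_dim (PAB \<epsilon>) - 1
    \<and> (0 < \<epsilon> \<longrightarrow> aff_dim (PAB \<epsilon>) = 12)"
proof -
  have valid: "\<forall>p\<in>PAB \<epsilon>. ineq_lhs \<epsilon> p \<le> \<epsilon> * (1 - \<epsilon>)"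
    using PAB_ineq_lhs_le assms by blast
  have lt: "aff_dim (equality_face \<epsilon>) < aff_dim (PAB \<epsilon>)"
    using equality_face_aff_dim_lt assms .
  have "aff_dim (equality_face \<epsilon>) = aff_dim (PAB \<epsilon>) - 1 \<and> (0 < \<epsilon> \<longrightarrow> aff_dim (PAB \<epsilon>) = 12)"
  proof (cases "\<epsilon> = 0")
    case True
    then show ?thesis
      using lt equality_face_0_aff_dim_ge_7 aff_dim_PAB_0_le_8 by simp
  next
    case False
    then have "0 < \<epsilon>" using assms(1) by simp
    moreover have "aff_dim (PAB \<epsilon>) \<le> 12"
      using assms by (intro aff_dim_PAB_le_12) auto
    ultimately show ?thesis
      using lt equality_face_aff_dim_ge_11[OF _ assms(2)] by force
  qed
  then show ?thesis
    using valid unfolding equality_face_def by blast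
qed

end
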